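(* Let $G$ be an outer-string graph with an outer-string representation $\varphi$, and let $\varphi(x_i)$ be an external string. Suppose a cop occupies $x_i$ and the robber occupies a vertex whose string does not intersect $\varphi(x_i)$ and lies to the right of $\varphi(x_i)$. If the cop stays on $x_i$, the robber cannot move to a string on the left of $\varphi(x_i)$ (without being captured).
   Context: An outer-string representation of $G$ assigns to each vertex a bounded curve (string) in the closed upper half-plane meeting the $x$-axis in exactly one point, an endpoint of the string, with distinct vertices adjacent iff their strings intersect. Order the vertices $v_1,\dots,v_n$ by the $x$-coordinate of the point where their string meets the $x$-axis; $v_i$ is on the left of $v_j$ (and $v_j$ on the right of $v_i$) if $i<j$. The strings partition the upper half-plane into regions, exactly one unbounded; a string is external if it has a point on the boundary of the unbounded region. Game of cops and robber: alternate moves, each piece stays or moves to an adjacent vertex; capture when a cop occupies the robber's vertex (a robber moving to a vertex of $N[x_i]$ while a cop is on $x_i$ is captured). *)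

theory Defs
  imports "HOL-Analysis.Analysis"
begin

definition upper_half :: "complex set" where
  "upper_half = {z. 0 \<le> Im z}"

definition is_graph :: "'v set \<Rightarrow> ('v \<Rightarrow> 'v \<Rightarrow> bool) \<Rightarrow> bool" where
  "is_graph V E \<longleftrightarrow> finite V \<and> (\<forall>u v. E u v \<longrightarrow> u \<in> V \<and> v \<in> V)
     \<and> (\<forall>u v. E u v \<longrightarrow> E v u) \<and> (\<forall>v. \<not> E v v)"

text \<open>Base point of a string: the endpoint where it meets the x-axis.\<close>
definition base :: "('v \<Rightarrow> real \<Rightarrow> complex) \<Rightarrow> 'v \<Rightarrow> complex" where
  "base \<phi> v = pathstart (\<phi> v)"

definition outer_string_rep ::
  "'v set \<Rightarrow> ('v \<Rightarrow> 'v \<Rightarrow> bool) \<Rightarrow> ('v \<Rightarrow> real \<Rightarrow> complex) \<Rightarrow> bool" where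
  "outer_string_rep V E \<phi> \<longleftrightarrow>
     (\<forall>v\<in>V. path (\<phi> v) \<and> path_image (\<phi> v) \<subseteq> upper_half
        \<and> path_image (\<phi> v) \<inter> {z. Im z = 0} = {pathstart (\<phi> v)})
     \<and> inj_on (\<lambda>v. Re (base \<phi> v)) V
     \<and> (\<forall>u\<in>V. \<forall>v\<in>V. u \<noteq> v \<longrightarrow> (E u v \<longleftrightarrow> path_image (\<phi> u) \<inter> path_image (\<phi> v) \<noteq> {}))"

definition left_of :: "('v \<Rightarrow> real \<Rightarrow> complex) \<Rightarrow> 'v \<Rightarrow> 'v \<Rightarrow> bool" where
  "left_of \<phi> u v \<longleftrightarrow> Re (base \<phi> u) < Re (base \<phi> v)"

definition regions :: "'v set \<Rightarrow> ('v \<Rightarrow> real \<Rightarrow> complex) \<Rightarrow> complex set set" where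
  "regions V \<phi> = components (upper_half - (\<Union>v\<in>V. path_image (\<phi> v)))"

definition external :: "'v set \<Rightarrow> ('v \<Rightarrow> real \<Rightarrow> complex) \<Rightarrow> 'v \<Rightarrow> bool" where
  "external V \<phi> x \<longleftrightarrow>
     (\<exists>C \<in> regions V \<phi>. \<not> bounded C \<and> path_image (\<phi> x) \<inter> frontier C \<noteq> {})"

definition closed_nbhd :: "('v \<Rightarrow> 'v \<Rightarrow> bool) \<Rightarrow> 'v \<Rightarrow> 'v set" where
  "closed_nbhd E x = insert x {y. E x y}"

end

theory Submission
  imports Defs "HOL-Complex_Analysis.Complex_Analysis"
begin

text \<open>If the robber's string \<open>\<phi> r\<close> met a string \<open>\<phi> w\<close> to the left of \<open>\<phi> x\<close> that misses
  \<open>\<phi> x\<close>, then a path inside \<open>\<phi> w \<union> \<phi> r\<close> from base w to base r, closed up by a semicircle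
  below the x-axis, would be a loop winding once around base x. This loop misses \<open>\<phi> x\<close>, so it
  winds once around every point of \<open>\<phi> x\<close>. But \<open>\<phi> x\<close> touches the unbounded region, which lies in
  the upper half-plane off all strings and hence also misses the loop; so the point where \<open>\<phi> x\<close>
  touches it lies outside the loop, where the winding number is 0.\<close>

lemma winding_number_eq_continuous_log:
  assumes p: "path p" and z: "z \<notin> path_image p" and q: "continuous_on {0..1} q"
    and pq: "\<And>t. t \<in> {0..1} \<Longrightarrow> p t = z + exp (q t)"
  shows "2 * of_real pi * \<i> * winding_number p z = q 1 - q 0"
proof -
  obtain q' where q': "path q'" "pathfinish q' - pathstart q' = 2 * of_real pi * \<i> * winding_number p z"
    "\<And>t. t \<in> {0..1} \<Longrightarrow> p t = z + exp (q' t)"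
    using winding_number_as_continuous_log[OF p z] by blast
  define k where "k t = (q t - q' t) / (2 * of_real pi * \<i>)" for t
  have k_Ints: "k t \<in> \<int>" if "t \<in> {0..1}" for t
  proof -
    have "exp (q t) = exp (q' t)" using pq[OF that] q'(3)[OF that] by simp
    then obtain n :: int where "q t = q' t + of_int (2 * n) * pi * \<i>" using exp_eq by blast
    then show ?thesis by (simp add: k_def)
  qed
  have "k constant_on {0..1}"
  proof (rule continuous_discrete_range_constant)
    show "continuous_on {0..1} k"
      using q q'(1) unfolding k_def path_def by (intro continuous_intros) auto
    show "\<exists>e>0. \<forall>s. s \<in> {0..1} \<and> k s \<noteq> k t \<longrightarrow> e \<le> norm (k s - k t)" if t: "t \<in> {0..1}" for t
    proof (intro exI[of _ 1] conjI allI impI)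
      fix s assume s: "s \<in> {0..1} \<and> k s \<noteq> k t"
      obtain m n :: int where "k s = of_int m" "k t = of_int n"
        using k_Ints s t by (metis Ints_cases)
      with s have "m \<noteq> n" "norm (k s - k t) = \<bar>of_int (m - n)\<bar>"
        by (auto simp flip: of_int_diff)
      then show "1 \<le> norm (k s - k t)" by linarith
    qed simp
  qed simp
  then have "k 1 = k 0" by (auto simp: constant_on_def)
  then have "q 1 - q' 1 = q 0 - q' 0" by (simp add: k_def)
  then show ?thesis
    using q'(2) by (simp add: pathstart_def pathfinish_def algebra_simps)
qed

lemma winding_number_avoiding_ray:
  assumes p: "path p" and d: "d \<noteq> 0"
    and ray: "\<And>t. t \<in> {0..1} \<Longrightarrow> (p t - z) / d \<notin> \<real>\<^sub>\<le>\<^sub>0"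
  shows "2 * of_real pi * \<i> * winding_number p z
           = Ln ((pathfinish p - z) / d) - Ln ((pathstart p - z) / d)"
proof -
  have "z \<notin> path_image p"
    using ray by (force simp: path_image_def)
  moreover have "continuous_on {0..1} (\<lambda>t. Ln ((p t - z) / d) + Ln d)"
    using p ray d unfolding path_def by (intro continuous_intros) auto
  moreover have "p t = z + exp (Ln ((p t - z) / d) + Ln d)" if "t \<in> {0..1}" for t
  proof -
    have "p t \<noteq> z" using ray[OF that] by auto
    then show ?thesis using d by (simp add: exp_add)
  qed
  ultimately show ?thesis
    using winding_number_eq_continuous_log[OF p] by (simp add: pathstart_def pathfinish_def)
qed

lemma Ln_ii_times_of_real:
  assumes "0 < a"
  shows "Ln (\<i> * of_real a) = of_real (ln a) + \<i> * of_real pi / 2"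
    and "Ln (- (\<i> * of_real a)) = of_real (ln a) - \<i> * of_real pi / 2"
  using Ln_times_of_real[OF assms, of "\<i>"] Ln_times_of_real[OF assms, of "-\<i>"]
  by (simp_all add: Ln_of_real assms mult.commute)

text \<open>P avoids the vertical ray downwards from z and L the one upwards, so on each the winding
  number is a difference of values of a branch of the logarithm.\<close>

lemma winding_number_upper_lower_loop:
  assumes P: "path P" and L: "path L"
    and PL: "pathfinish P = pathstart L" and LP: "pathfinish L = pathstart P"
    and a: "Im (pathstart P) = Im z" "Re (pathstart P) < Re z"
    and b: "Im (pathstart L) = Im z" "Re z < Re (pathstart L)"
    and upper: "\<And>u. u \<in> path_image P \<Longrightarrow> Im z \<le> Im u \<and> u \<noteq> z"
    and lower: "\<And>u. u \<in> path_image L \<Longrightarrow> Im u \<le> Im z \<and> u \<noteq> z"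
  shows "winding_number (P +++ L) z = -1"
proof -
  define \<alpha> where "\<alpha> = Re (pathstart L) - Re z"
  define \<beta> where "\<beta> = Re z - Re (pathstart P)"
  have \<alpha>: "0 < \<alpha>" "pathstart L - z = of_real \<alpha>" and \<beta>: "0 < \<beta>" "pathstart P - z = - of_real \<beta>"
    using a b by (auto simp: \<alpha>_def \<beta>_def complex_eq_iff)
  have "2 * of_real pi * \<i> * winding_number P z
      = Ln ((pathfinish P - z) / \<i>) - Ln ((pathstart P - z) / \<i>)"
    using upper by (intro winding_number_avoiding_ray[OF P])
      (force simp: path_image_def complex_nonpos_Reals_iff complex_eq_iff)+
  also have "\<dots> = - \<i> * of_real pi - of_real (ln \<beta>) + of_real (ln \<alpha>)"
  proof -
    have "(pathfinish P - z) / \<i> = - (\<i> * of_real \<alpha>)" "(pathstart P - z) / \<i> = \<i> * of_real \<beta>"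
      by (simp_all add: PL \<alpha>(2) \<beta>(2) field_simps)
    then show ?thesis
      by (simp add: Ln_ii_times_of_real \<alpha>(1) \<beta>(1))
  qed
  finally have wP: "2 * of_real pi * \<i> * winding_number P z
      = - \<i> * of_real pi - of_real (ln \<beta>) + of_real (ln \<alpha>)" .
  have "2 * of_real pi * \<i> * winding_number L z
      = Ln ((pathfinish L - z) / - \<i>) - Ln ((pathstart L - z) / - \<i>)"
    using lower by (intro winding_number_avoiding_ray[OF L])
      (force simp: path_image_def complex_nonpos_Reals_iff complex_eq_iff)+
  also have "\<dots> = - \<i> * of_real pi + of_real (ln \<beta>) - of_real (ln \<alpha>)"
  proof -
    have "(pathfinish L - z) / - \<i> = - (\<i> * of_real \<beta>)" "(pathstart L - z) / - \<i> = \<i> * of_real \<alpha>"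
      by (simp_all add: LP \<alpha>(2) \<beta>(2) field_simps)
    then show ?thesis
      by (simp add: Ln_ii_times_of_real \<alpha>(1) \<beta>(1))
  qed
  finally have wL: "2 * of_real pi * \<i> * winding_number L z
      = - \<i> * of_real pi + of_real (ln \<beta>) - of_real (ln \<alpha>)" .
  have "z \<notin> path_image P" "z \<notin> path_image L"
    using upper lower by blast+
  with P L PL have "winding_number (P +++ L) z = winding_number P z + winding_number L z"
    by (intro winding_number_join)
  moreover have "2 * of_real pi * \<i> * (winding_number P z + winding_number L z)
      = 2 * of_real pi * \<i> * -1"
    using wP wL by (simp add: distrib_left)
  then have "winding_number P z + winding_number L z = -1"
    by (subst (asm) mult_left_cancel) auto
  ultimately show ?thesis by simp
qed

lemma path_image_lower_semicircle:
  assumes "a < b"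
  shows "path_image (part_circlepath (of_real ((a + b) / 2)) ((b - a) / 2) 0 (- pi))
           \<subseteq> {u. Im u < 0} \<union> {of_real a, of_real b}"
proof
  fix u assume "u \<in> path_image (part_circlepath (of_real ((a + b) / 2)) ((b - a) / 2) 0 (- pi))"
  then have "u \<in> (\<lambda>x. of_real ((a + b) / 2) + of_real ((b - a) / 2) * cis x) ` {- pi..0}"
    using pi_gt_zero by (simp add: path_image_part_circlepath' closed_segment_eq_real_ivl)
  then obtain x where x: "- pi \<le> x" "x \<le> 0" and u: "u = of_real ((a + b) / 2) + of_real ((b - a) / 2) * cis x"
    by auto
  consider "x = 0" | "x = - pi" | "- pi < x" "x < 0"
    using x by linarith
  then show "u \<in> {u. Im u < 0} \<union> {of_real a, of_real b}"
  proof cases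
    case 3
    then have "sin x < 0"
      using sin_gt_zero[of "- x"] by auto
    then show ?thesis
      using assms by (simp add: u mult_pos_neg)
  qed (simp_all add: u complex_eq_iff field_simps)
qed

lemma closure_of_unbounded_connected_in_outside:
  fixes C :: "'a::real_normed_vector set"
  assumes "connected C" "\<not> bounded C" "C \<inter> S = {}" "y \<in> closure C" "y \<notin> S"
  shows "y \<in> outside S"
proof -
  have "connected (insert y C)"
    by (rule connected_intermediate_closure[OF assms(1)]) (use assms(4) closure_subset in auto)
  with assms(3,5) have "insert y C \<subseteq> connected_component_set (- S) y"
    by (intro connected_component_maximal) auto
  then have "\<not> bounded (connected_component_set (- S) y)"
    using assms(2) bounded_subset by blast
  then show ?thesis
    by (simp add: outside)
qed

lemma loop_through_intersecting_strings:
  assumes g: "path g" "path_image g \<subseteq> upper_half" "Im (pathstart g) = 0"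
    and h: "path h" "path_image h \<subseteq> upper_half" "Im (pathstart h) = 0"
    and meet: "path_image g \<inter> path_image h \<noteq> {}"
    and c: "Im c = 0" "Re (pathstart g) < Re c" "Re c < Re (pathstart h)"
      "c \<notin> path_image g \<union> path_image h"
  obtains \<gamma> where "path \<gamma>" "pathfinish \<gamma> = pathstart \<gamma>"
    "path_image \<gamma> \<inter> upper_half \<subseteq> path_image g \<union> path_image h"
    "winding_number \<gamma> c = -1"
proof -
  have "path_connected (path_image g \<union> path_image h)"
    using g h meet by (intro path_connected_Un path_connected_path_image)
  then obtain P where P: "path P" "path_image P \<subseteq> path_image g \<union> path_image h"
      "pathstart P = pathstart g" "pathfinish P = pathstart h"
    by (meson path_connected_def pathstart_in_path_image UnI1 UnI2)
  define a b where "a = Re (pathstart g)" and "b = Re (pathstart h)"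
  have ac: "a < Re c" "Re c < b" and ga: "pathstart g = of_real a" and hb: "pathstart h = of_real b"
    using c g(3) h(3) by (auto simp: a_def b_def complex_eq_iff)
  then have ab: "a < b" by linarith
  define L where "L = part_circlepath (of_real ((a + b) / 2)) ((b - a) / 2) 0 (- pi)"
  have L: "path L" "pathstart L = of_real b" "pathfinish L = of_real a"
    by (simp_all add: L_def exp_minus field_simps)
  have L_image: "path_image L \<subseteq> {u. Im u < 0} \<union> {of_real a, of_real b}"
    unfolding L_def using ab by (rule path_image_lower_semicircle)
  have "path_image L \<inter> upper_half \<subseteq> {pathstart g, pathstart h}"
    using L_image ga hb by (auto simp: upper_half_def)
  also have "\<dots> \<subseteq> path_image g \<union> path_image h"
    by (simp add: pathstart_in_path_image)
  finally have "path_image (P +++ L) \<inter> upper_half \<subseteq> path_image g \<union> path_image h"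
    using path_image_join_subset[of P L] P(2) by blast
  moreover have "winding_number (P +++ L) c = -1"
  proof (rule winding_number_upper_lower_loop)
    show "Im c \<le> Im u \<and> u \<noteq> c" if "u \<in> path_image P" for u
      using that P(2) g(2) h(2) c(1,4) by (auto simp: upper_half_def)
    show "Im u \<le> Im c \<and> u \<noteq> c" if "u \<in> path_image L" for u
    proof -
      have "Im u < 0 \<or> u = of_real a \<or> u = of_real b"
        using that L_image by blast
      then show ?thesis
        using ac c(1) by (auto simp: complex_eq_iff)
    qed
  qed (simp_all add: P L ga hb ac c(1))
  ultimately show ?thesis
    using P L ga hb by (intro that[of "P +++ L"]) simp_all
qed

lemma outer_string_rep_string:
  assumes "outer_string_rep V E \<phi>" "v \<in> V"
  shows "path (\<phi> v)" "path_image (\<phi> v) \<subseteq> upper_half" "Im (pathstart (\<phi> v)) = 0"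
proof -
  have "path (\<phi> v) \<and> path_image (\<phi> v) \<subseteq> upper_half
      \<and> path_image (\<phi> v) \<inter> {z. Im z = 0} = {pathstart (\<phi> v)}"
    using assms by (simp add: outer_string_rep_def)
  then show "path (\<phi> v)" "path_image (\<phi> v) \<subseteq> upper_half" "Im (pathstart (\<phi> v)) = 0"
    by blast+
qed

lemma outer_string_rep_adjacent_iff:
  assumes "outer_string_rep V E \<phi>" "u \<in> V" "v \<in> V" "u \<noteq> v"
  shows "E u v \<longleftrightarrow> path_image (\<phi> u) \<inter> path_image (\<phi> v) \<noteq> {}"
  using assms by (simp add: outer_string_rep_def)

lemma winding_number_zero_on_external_string:
  assumes "external V \<phi> x" "path (\<phi> x)"
    and \<gamma>: "path \<gamma>" "pathfinish \<gamma> = pathstart \<gamma>"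
    and "path_image \<gamma> \<inter> upper_half \<subseteq> (\<Union>v\<in>V. path_image (\<phi> v))"
    and x_off_\<gamma>: "path_image (\<phi> x) \<inter> path_image \<gamma> = {}"
    and z: "z \<in> path_image (\<phi> x)"
  shows "winding_number \<gamma> z = 0"
proof -
  obtain C y where C: "C \<in> regions V \<phi>" "\<not> bounded C"
    and y: "y \<in> path_image (\<phi> x)" "y \<in> frontier C"
    using assms(1) by (auto simp: external_def)
  have "C \<subseteq> upper_half - (\<Union>v\<in>V. path_image (\<phi> v))"
    using C(1) unfolding regions_def by (rule in_components_subset)
  then have "C \<inter> path_image \<gamma> = {}"
    using assms(5) by blast
  moreover have "connected C"
    using C(1) unfolding regions_def by (rule in_components_connected)
  ultimately have "y \<in> outside (path_image \<gamma>)"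
    using C(2) y x_off_\<gamma> by (intro closure_of_unbounded_connected_in_outside) (auto simp: frontier_def)
  with \<gamma> have "winding_number \<gamma> y = 0"
    by (rule winding_number_zero_in_outside)
  moreover have "winding_number \<gamma> z = winding_number \<gamma> y"
    using winding_number_constant[OF \<gamma> connected_path_image x_off_\<gamma>] assms(2) y(1) z
    by (auto simp: constant_on_def)
  ultimately show ?thesis
    by simp
qed

theorem lemma4:
  fixes V :: "'v set" and E :: "'v \<Rightarrow> 'v \<Rightarrow> bool" and \<phi> :: "'v \<Rightarrow> real \<Rightarrow> complex"
    and x r :: 'v
  assumes "is_graph V E"
    and "outer_string_rep V E \<phi>"
    and "x \<in> V" and "external V \<phi> x"
    and "r \<in> V"
    and "path_image (\<phi> r) \<inter> path_image (\<phi> x) = {}"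
    and "left_of \<phi> x r"
  shows "\<forall>w\<in>V. E r w \<and> left_of \<phi> w x \<longrightarrow> w \<in> closed_nbhd E x"
proof (intro ballI impI, elim conjE)
  fix w assume w: "w \<in> V" and rw: "E r w" and wx: "left_of \<phi> w x"
  note string = outer_string_rep_string[OF assms(2)]
  show "w \<in> closed_nbhd E x"
  proof (rule ccontr)
    assume "w \<notin> closed_nbhd E x"
    then have "w \<noteq> x" "\<not> E x w"
      by (simp_all add: closed_nbhd_def)
    then have x_apart: "path_image (\<phi> x) \<inter> (path_image (\<phi> w) \<union> path_image (\<phi> r)) = {}"
      using outer_string_rep_adjacent_iff[OF assms(2,3) w] assms(6) by blast
    have "r \<noteq> w"
      using assms(1) rw by (auto simp: is_graph_def)
    then have "path_image (\<phi> w) \<inter> path_image (\<phi> r) \<noteq> {}"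
      using outer_string_rep_adjacent_iff[OF assms(2,5) w] rw by blast
    moreover have "pathstart (\<phi> x) \<notin> path_image (\<phi> w) \<union> path_image (\<phi> r)"
      using x_apart pathstart_in_path_image by blast
    moreover have "Re (pathstart (\<phi> w)) < Re (pathstart (\<phi> x))"
        "Re (pathstart (\<phi> x)) < Re (pathstart (\<phi> r))"
      using wx assms(7) by (simp_all add: left_of_def base_def)
    ultimately obtain \<gamma> where \<gamma>: "path \<gamma>" "pathfinish \<gamma> = pathstart \<gamma>"
        "path_image \<gamma> \<inter> upper_half \<subseteq> path_image (\<phi> w) \<union> path_image (\<phi> r)"
        "winding_number \<gamma> (pathstart (\<phi> x)) = -1"
      using loop_through_intersecting_strings string[OF w] string[OF assms(5)] string(3)[OF assms(3)]
      by metis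
    have "winding_number \<gamma> (pathstart (\<phi> x)) = 0"
    proof (rule winding_number_zero_on_external_string[OF assms(4) string(1)[OF assms(3)] \<gamma>(1,2)])
      show "path_image \<gamma> \<inter> upper_half \<subseteq> (\<Union>v\<in>V. path_image (\<phi> v))"
        using \<gamma>(3) w assms(5) by blast
      show "path_image (\<phi> x) \<inter> path_image \<gamma> = {}"
        using \<gamma>(3) x_apart string(2)[OF assms(3)] by blast
    qed (rule pathstart_in_path_image)
    with \<gamma>(4) show False
      by simp
  qed
qed

end
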